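(* Let $k\ge 2$ and let $G$ be a $k$-connected graph. Let $H\subset G$ be a minimum spanning $k$-connected subgraph of $G$. Then \[ mc_k(G)\ge e(G)-e(H)+h_k(G)\ge e(G)-e(H)+1. \]
   Context: All graphs are finite, simple and undirected. A graph is $k$-connected if it has at least $k+1$ vertices and remains connected after deleting any at most $k-1$ vertices. Paths are called disjoint if they are internally vertex-disjoint. An edge-coloured path is monochromatic if all its edges have the same colour. For a $k$-connected graph $G$, an edge-colouring is monochromatic $k$-connected if any two vertices are connected by $k$ disjoint monochromatic paths; $mc_k(G)$ is the maximum number of colours in a monochromatic $k$-connected colouring of $G$. A minimum spanning $k$-connected subgraph of $G$ is a $k$-connected subgraph $H$ with $V(H)=V(G)$ and $e(H)$ minimum among such subgraphs. $h_k(G)=\max\{mc_k(H): H \text{ is a minimum spanning } k\text{-connected subgraph of } G\}$. *)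

theory Defs
  imports Main
begin

definition simple_graph :: "'a set \<Rightarrow> 'a set set \<Rightarrow> bool" where
  "simple_graph V E \<longleftrightarrow> finite V \<and>
     (\<forall>e\<in>E. \<exists>x y. x \<noteq> y \<and> x \<in> V \<and> y \<in> V \<and> e = {x, y})"

definition is_path :: "'a set \<Rightarrow> 'a set set \<Rightarrow> 'a list \<Rightarrow> 'a \<Rightarrow> 'a \<Rightarrow> bool" where
  "is_path V E xs u v \<longleftrightarrow> xs \<noteq> [] \<and> hd xs = u \<and> last xs = v \<and> distinct xs \<and>
     set xs \<subseteq> V \<and> (\<forall>i. Suc i < length xs \<longrightarrow> {xs ! i, xs ! Suc i} \<in> E)"

definition path_edges :: "'a list \<Rightarrow> 'a set set" where
  "path_edges xs = {{xs ! i, xs ! Suc i} | i. Suc i < length xs}"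

definition interior :: "'a list \<Rightarrow> 'a set" where
  "interior xs = set (butlast (tl xs))"

definition connected_graph :: "'a set \<Rightarrow> 'a set set \<Rightarrow> bool" where
  "connected_graph V E \<longleftrightarrow> (\<forall>u\<in>V. \<forall>v\<in>V. \<exists>xs. is_path V E xs u v)"

definition k_connected :: "'a set \<Rightarrow> 'a set set \<Rightarrow> nat \<Rightarrow> bool" where
  "k_connected V E k \<longleftrightarrow> card V \<ge> k + 1 \<and>
     (\<forall>S. S \<subseteq> V \<and> card S \<le> k - 1 \<longrightarrow>
        connected_graph (V - S) {e\<in>E. e \<inter> S = {}})"

definition mono_k_conn :: "'a set \<Rightarrow> 'a set set \<Rightarrow> nat \<Rightarrow> ('a set \<Rightarrow> nat) \<Rightarrow> bool" where
  "mono_k_conn V E k c \<longleftrightarrow>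
     (\<forall>u\<in>V. \<forall>v\<in>V. u \<noteq> v \<longrightarrow>
        (\<exists>P. card P = k \<and>
           (\<forall>xs\<in>P. is_path V E xs u v \<and> (\<exists>col. \<forall>e\<in>path_edges xs. c e = col)) \<and>
           (\<forall>xs\<in>P. \<forall>ys\<in>P. xs \<noteq> ys \<longrightarrow> interior xs \<inter> interior ys = {})))"

definition mc :: "'a set \<Rightarrow> 'a set set \<Rightarrow> nat \<Rightarrow> nat" where
  "mc V E k = Max {card (c ` E) | c. mono_k_conn V E k c}"

definition min_spanning_k_conn :: "'a set \<Rightarrow> 'a set set \<Rightarrow> nat \<Rightarrow> 'a set set \<Rightarrow> bool" where
  "min_spanning_k_conn V E k F \<longleftrightarrow> F \<subseteq> E \<and> k_connected V F k \<and>
     (\<forall>F'. F' \<subseteq> E \<and> k_connected V F' k \<longrightarrow> card F \<le> card F')"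

definition h :: "'a set \<Rightarrow> 'a set set \<Rightarrow> nat \<Rightarrow> nat" where
  "h V E k = Max {mc V F k | F. min_spanning_k_conn V E k F}"

end

theory Submission
  imports Defs
begin

text \<open>
  Let \<open>H\<^sub>0\<close> be a minimum spanning \<open>k\<close>-connected subgraph with \<open>mc\<^sub>k(H\<^sub>0) = h\<^sub>k(G)\<close>, with an
  optimal colouring. Giving each of the \<open>e(G) - e(H\<^sub>0) = e(G) - e(H)\<close> edges outside \<open>H\<^sub>0\<close> a new
  colour of its own keeps the colouring monochromatic \<open>k\<close>-connected, as the old monochromatic
  paths survive; this is the first inequality. Since \<open>mc\<close> and \<open>h\<close> are maxima, all this needs
  \<open>H\<^sub>0\<close> to have some monochromatic \<open>k\<close>-connected colouring: the constant one is, because in a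
  \<open>k\<close>-connected graph any two vertices are joined by \<open>k\<close> internally disjoint paths (Menger's
  theorem, by Goering's induction on the number of edges). As \<open>H\<^sub>0\<close> has an edge, it uses a
  colour, so \<open>h\<^sub>k(G) \<ge> 1\<close>.
\<close>

section \<open>Walks, paths and reachability\<close>

fun is_walk :: "'a set set \<Rightarrow> 'a list \<Rightarrow> bool" where
  "is_walk E (x # y # xs) \<longleftrightarrow> {x, y} \<in> E \<and> is_walk E (y # xs)"
| "is_walk E _ \<longleftrightarrow> True"

lemma is_walk_iff_nth: "is_walk E xs \<longleftrightarrow> (\<forall>i. Suc i < length xs \<longrightarrow> {xs ! i, xs ! Suc i} \<in> E)"
proof (induction E xs rule: is_walk.induct)
  case (1 E x y xs)
  have "(\<forall>i. Suc i < length (x # y # xs) \<longrightarrow> {(x # y # xs) ! i, (x # y # xs) ! Suc i} \<in> E)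
    \<longleftrightarrow> {x, y} \<in> E \<and> (\<forall>i. Suc i < length (y # xs) \<longrightarrow> {(y # xs) ! i, (y # xs) ! Suc i} \<in> E)"
    by (auto simp: nth_Cons split: nat.splits)
  with 1 show ?case by simp
qed auto

lemma is_walk_Cons: "is_walk E (x # xs) \<longleftrightarrow> is_walk E xs \<and> (xs \<noteq> [] \<longrightarrow> {x, hd xs} \<in> E)"
  by (cases xs) auto

lemma is_walk_append:
  "is_walk E (xs @ ys) \<longleftrightarrow> is_walk E xs \<and> is_walk E ys \<and> (xs \<noteq> [] \<longrightarrow> ys \<noteq> [] \<longrightarrow> {last xs, hd ys} \<in> E)"
  by (induction xs) (auto simp: is_walk_Cons)

lemma is_walk_rev: "is_walk E (rev xs) \<longleftrightarrow> is_walk E xs"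
proof -
  have "is_walk E (rev xs)" if "is_walk E xs" for xs
    using that by (induction xs) (auto simp: is_walk_append is_walk_Cons insert_commute last_rev)
  then show ?thesis by (metis rev_rev_ident)
qed

lemma is_walk_mono: "is_walk E xs \<Longrightarrow> E \<subseteq> E' \<Longrightarrow> is_walk E' xs"
  by (induction E xs rule: is_walk.induct) auto

lemma is_path_iff_walk:
  "is_path W E xs u v \<longleftrightarrow>
     xs \<noteq> [] \<and> hd xs = u \<and> last xs = v \<and> distinct xs \<and> set xs \<subseteq> W \<and> is_walk E xs"
  unfolding is_path_def is_walk_iff_nth by auto

lemma is_path_endpoints: "is_path W E xs u v \<Longrightarrow> u \<in> set xs \<and> v \<in> set xs \<and> set xs \<subseteq> W"
  unfolding is_path_iff_walk by auto

lemma is_path_rev: "is_path W E (rev xs) v u \<longleftrightarrow> is_path W E xs u v"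
  by (auto simp: is_path_iff_walk is_walk_rev hd_rev last_rev)

lemma is_path_vertices: "is_path W E xs u v \<Longrightarrow> set xs \<subseteq> W' \<Longrightarrow> is_path W' E xs u v"
  by (simp add: is_path_iff_walk)

lemma is_path_edges: "is_path W E xs u v \<Longrightarrow> E \<subseteq> E' \<Longrightarrow> is_path W E' xs u v"
  by (auto simp: is_path_iff_walk intro: is_walk_mono)

lemma is_path_prefix: "is_path W E (xs @ ys) u v \<Longrightarrow> xs \<noteq> [] \<Longrightarrow> is_path W E xs u (last xs)"
  by (auto simp: is_path_iff_walk is_walk_append)

lemma is_path_append:
  assumes "is_path W E xs u x" "is_path W E ys y v" "{x, y} \<in> E" "set xs \<inter> set ys = {}"
  shows "is_path W E (xs @ ys) u v"
  using assms by (auto simp: is_path_iff_walk is_walk_append)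

lemma is_path_join:
  assumes xs: "is_path W E xs u s" and ys: "is_path W E ys s v" and meet: "set xs \<inter> set ys = {s}"
  shows "is_path W E (xs @ tl ys) u v"
proof -
  obtain zs where ys_eq: "ys = s # zs" using ys by (auto simp: is_path_iff_walk neq_Nil_conv)
  show ?thesis
  proof (cases "zs = []")
    case True
    with xs ys ys_eq show ?thesis by (simp add: is_path_iff_walk)
  next
    case False
    have "is_path W E zs (hd zs) v" "{s, hd zs} \<in> E"
      using ys ys_eq False by (auto simp: is_path_iff_walk is_walk_Cons)
    moreover have "set xs \<inter> set zs = {}"
      using meet ys ys_eq by (auto simp: is_path_iff_walk)
    ultimately show ?thesis using is_path_append[OF xs] ys_eq by simp
  qed
qed

definition glue :: "'a list \<Rightarrow> 'a list \<Rightarrow> 'a list" where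
  "glue xs ys = (if last xs = hd ys then xs @ tl ys else xs @ ys)"

lemma set_glue: "set (glue xs ys) \<subseteq> set xs \<union> set ys"
  unfolding glue_def by (cases ys) auto

lemma is_path_glue:
  assumes xs: "is_path W E xs u s" and ys: "is_path W E ys s' v"
    and meet: "set xs \<inter> set ys \<subseteq> {s} \<inter> {s'}" and "s = s' \<or> {s, s'} \<in> E"
  shows "is_path W E (glue xs ys) u v"
proof (cases "s = s'")
  case True
  moreover have "s \<in> set xs" "s' \<in> set ys" using is_path_endpoints[OF xs] is_path_endpoints[OF ys] by auto
  ultimately have "set xs \<inter> set ys = {s}" using meet by blast
  with xs ys True have "is_path W E (xs @ tl ys) u v" by (simp add: is_path_join)
  moreover have "last xs = hd ys" using xs ys True by (simp add: is_path_iff_walk)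
  ultimately show ?thesis unfolding glue_def by simp
next
  case False
  with meet assms(4) have "set xs \<inter> set ys = {}" "{s, s'} \<in> E" by auto
  with is_path_append[OF xs ys] have "is_path W E (xs @ ys) u v" by simp
  moreover have "last xs \<noteq> hd ys" using xs ys False by (simp add: is_path_iff_walk)
  ultimately show ?thesis unfolding glue_def by simp
qed

lemma is_path_tl:
  assumes "is_path W E xs u v" "u \<noteq> v"
  shows "{u, hd (tl xs)} \<in> E \<and> is_path (W - {u}) E (tl xs) (hd (tl xs)) v"
proof -
  obtain ys where xs: "xs = u # ys" using assms(1) by (auto simp: is_path_iff_walk neq_Nil_conv)
  with assms have "ys \<noteq> []" by (auto simp: is_path_iff_walk)
  with assms xs show ?thesis by (auto simp: is_path_iff_walk is_walk_Cons)
qed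

inductive reachable :: "'a set set \<Rightarrow> 'a set \<Rightarrow> 'a \<Rightarrow> 'a \<Rightarrow> bool" for E W where
  refl: "a \<in> W \<Longrightarrow> reachable E W a a"
| step: "reachable E W a b \<Longrightarrow> {b, c} \<in> E \<Longrightarrow> c \<in> W \<Longrightarrow> reachable E W a c"

lemma reachable_in: "reachable E W a b \<Longrightarrow> a \<in> W \<and> b \<in> W"
  by (induction rule: reachable.induct) auto

lemma reachable_trans: "reachable E W b c \<Longrightarrow> reachable E W a b \<Longrightarrow> reachable E W a c"
  by (induction rule: reachable.induct) (simp, metis reachable.step)

lemma reachable_edge: "{a, b} \<in> E \<Longrightarrow> a \<in> W \<Longrightarrow> b \<in> W \<Longrightarrow> reachable E W a b"
  by (blast intro: reachable.intros)

lemma reachable_sym: "reachable E W a b \<Longrightarrow> reachable E W b a"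
proof (induction rule: reachable.induct)
  case (step a b c)
  then have "reachable E W c b"
    using reachable_in[OF step.hyps(1)] by (simp add: reachable_edge insert_commute)
  then show ?case using step.IH reachable_trans by metis
qed (rule reachable.refl)

lemma reachable_subset: "reachable E W a b \<Longrightarrow> W \<subseteq> W' \<Longrightarrow> reachable E W' a b"
  by (induction rule: reachable.induct) (simp_all add: reachable.refl reachable.step subset_iff)

lemma reachable_no_edges: "reachable {} W a b \<Longrightarrow> a = b"
  by (induction rule: reachable.induct) auto

lemma is_path_reachable: "is_path W E xs u v \<Longrightarrow> reachable E W u v"
proof (induction xs arbitrary: v rule: rev_induct)
  case (snoc x xs)
  show ?case
  proof (cases "xs = []")
    case True
    with snoc.prems show ?thesis by (auto simp: is_path_iff_walk intro: reachable.refl)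
  next
    case False
    have "reachable E W u (last xs)" using snoc.IH is_path_prefix[OF snoc.prems False] .
    moreover have "{last xs, x} \<in> E" "x \<in> W" "v = x"
      using snoc.prems False by (auto simp: is_path_iff_walk is_walk_append)
    ultimately show ?thesis by (blast intro: reachable.step)
  qed
qed (simp add: is_path_iff_walk)

lemma path_prefix_reachable:
  assumes p: "is_path W E p a b" and T: "set p \<inter> T = {b}" and z: "z \<in> set p" "z \<noteq> b"
  shows "reachable E (W - T) a z"
proof -
  obtain ys zs where split: "p = ys @ z # zs" using split_list[OF z(1)] by blast
  have path: "is_path W E ((ys @ [z]) @ zs) a b" using p split by simp
  then have dist: "distinct (ys @ z # zs)" and last: "last (z # zs) = b"
    and sub: "set (ys @ z # zs) \<subseteq> W"
    unfolding is_path_iff_walk by auto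
  have "zs \<noteq> []" using last z(2) by auto
  then have "b \<in> set zs" using last by (metis last_ConsR last_in_set)
  then have "b \<notin> set (ys @ [z])" using dist z(2) by auto
  then have "set (ys @ [z]) \<subseteq> W - T" using T split sub by auto
  moreover have "is_path W E (ys @ [z]) a z" using is_path_prefix[OF path] by simp
  ultimately show ?thesis by (meson is_path_reachable is_path_vertices)
qed

section \<open>Linkages\<close>

definition connects :: "'a set set \<Rightarrow> 'a set \<Rightarrow> 'a set \<Rightarrow> 'a set \<Rightarrow> bool" where
  "connects E W A B \<longleftrightarrow> (\<exists>a\<in>A. \<exists>b\<in>B. reachable E W a b)"

lemma connects_sym: "connects E W A B \<longleftrightarrow> connects E W B A"
  unfolding connects_def by (blast intro: reachable_sym)

lemma connects_trans: "connects E W A {z} \<Longrightarrow> connects E W {z} B \<Longrightarrow> connects E W A B"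
  unfolding connects_def by (blast intro: reachable_trans)

lemma connects_step: "connects E W A {b} \<Longrightarrow> {b, c} \<in> E \<Longrightarrow> c \<in> W \<Longrightarrow> connects E W A {c}"
  unfolding connects_def by (blast intro: reachable.step)

definition disjoint_paths :: "'a list set \<Rightarrow> bool" where
  "disjoint_paths P \<longleftrightarrow> (\<forall>p\<in>P. \<forall>q\<in>P. p \<noteq> q \<longrightarrow> set p \<inter> set q = {})"

definition linkage :: "'a set set \<Rightarrow> 'a set \<Rightarrow> 'a set \<Rightarrow> 'a set \<Rightarrow> 'a list set \<Rightarrow> bool" where
  "linkage E W A B P \<longleftrightarrow>
     (\<forall>p\<in>P. is_path W E p (hd p) (last p) \<and> hd p \<in> A \<and> last p \<in> B) \<and> disjoint_paths P"

lemma linkage_paths: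
  "linkage E W A B P \<Longrightarrow> p \<in> P \<Longrightarrow> is_path W E p (hd p) (last p) \<and> hd p \<in> A \<and> last p \<in> B"
  by (simp add: linkage_def)

lemma linkage_disjoint: "linkage E W A B P \<Longrightarrow> p \<in> P \<Longrightarrow> q \<in> P \<Longrightarrow> p \<noteq> q \<Longrightarrow> set p \<inter> set q = {}"
  by (simp add: linkage_def disjoint_paths_def)

lemma linkage_image:
  assumes "\<And>t. t \<in> T \<Longrightarrow> is_path W E (f t) (hd (f t)) (last (f t)) \<and> hd (f t) \<in> A \<and> last (f t) \<in> B"
    and "\<And>t t'. t \<in> T \<Longrightarrow> t' \<in> T \<Longrightarrow> t \<noteq> t' \<Longrightarrow> set (f t) \<inter> set (f t') = {}"
  shows "linkage E W A B (f ` T) \<and> card (f ` T) = card T"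
proof
  have "inj_on f T"
  proof (rule inj_onI)
    fix t t' assume "t \<in> T" "t' \<in> T" "f t = f t'"
    moreover have "f t \<noteq> []" using assms(1)[OF \<open>t \<in> T\<close>] by (simp add: is_path_iff_walk)
    ultimately show "t = t'" using assms(2) by fastforce
  qed
  then show "card (f ` T) = card T" by (rule card_image)
  have "disjoint_paths (f ` T)" unfolding disjoint_paths_def
  proof (intro ballI impI)
    fix r r' assume "r \<in> f ` T" "r' \<in> f ` T" "r \<noteq> r'"
    then obtain t t' where "t \<in> T" "t' \<in> T" "r = f t" "r' = f t'" "t \<noteq> t'" by blast
    then show "set r \<inter> set r' = {}" using assms(2) by blast
  qed
  with assms(1) show "linkage E W A B (f ` T)" unfolding linkage_def by blast
qed

lemma inj_on_vertex_choice:
  assumes "disjoint_paths P" "\<And>p. p \<in> P \<Longrightarrow> f p \<in> set p"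
  shows "inj_on f P"
  using assms unfolding disjoint_paths_def inj_on_def by (metis disjoint_iff)

lemma bij_betw_vertex_choice:
  assumes "disjoint_paths P" "\<And>p. p \<in> P \<Longrightarrow> f p \<in> set p \<inter> T" "finite T" "card T \<le> card P"
  shows "bij_betw f P T"
proof -
  have inj: "inj_on f P" using assms(1,2) inj_on_vertex_choice by blast
  have "f ` P \<subseteq> T" using assms(2) by blast
  moreover have "card (f ` P) = card P" using card_image[OF inj] .
  ultimately have "f ` P = T" using assms(3,4) by (metis card_seteq)
  with inj show ?thesis by (simp add: bij_betw_def)
qed

lemma disjoint_paths_shrink:
  assumes P: "disjoint_paths P" and f: "\<And>p. p \<in> P \<Longrightarrow> f p \<noteq> [] \<and> set (f p) \<subseteq> set p"
  shows "disjoint_paths (f ` P) \<and> card (f ` P) = card P"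
proof
  show "disjoint_paths (f ` P)" unfolding disjoint_paths_def
  proof (intro ballI impI)
    fix p' q' assume "p' \<in> f ` P" "q' \<in> f ` P" "p' \<noteq> q'"
    then obtain p q where "p \<in> P" "q \<in> P" "p' = f p" "q' = f q" "p \<noteq> q" by blast
    then show "set p' \<inter> set q' = {}" using P f unfolding disjoint_paths_def by blast
  qed
  have "inj_on (\<lambda>p. hd (f p)) P"
    using P f by (intro inj_on_vertex_choice) (auto dest: hd_in_set)
  then have "inj_on f P" by (auto simp: inj_on_def)
  then show "card (f ` P) = card P" by (rule card_image)
qed

lemma linkage_edges: "linkage E W A B P \<Longrightarrow> E \<subseteq> E' \<Longrightarrow> linkage E' W A B P"
  unfolding linkage_def by (auto intro: is_path_edges)

lemma linkage_rev: "linkage E W A B P \<Longrightarrow> linkage E W B A (rev ` P) \<and> card (rev ` P) = card P"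
proof -
  assume P: "linkage E W A B P"
  then have "disjoint_paths P" by (simp add: linkage_def)
  then have "disjoint_paths (rev ` P) \<and> card (rev ` P) = card P"
    using P by (intro disjoint_paths_shrink) (simp_all add: linkage_def is_path_iff_walk)
  moreover have "is_path W E (rev p) (hd (rev p)) (last (rev p)) \<and> hd (rev p) \<in> B \<and> last (rev p) \<in> A"
    if "p \<in> P" for p
    using P that by (simp add: linkage_def is_path_rev hd_rev last_rev)
  ultimately show ?thesis by (auto simp: linkage_def)
qed

lemma finite_linkage: "linkage E W A B P \<Longrightarrow> finite W \<Longrightarrow> finite P"
proof -
  assume P: "linkage E W A B P" and "finite W"
  have hd: "hd p \<in> set p" "hd p \<in> W" if "p \<in> P" for p
    using is_path_endpoints[OF linkage_paths[OF P that, THEN conjunct1]] by auto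
  have "inj_on hd P" using P hd(1) by (intro inj_on_vertex_choice) (simp_all add: linkage_def)
  moreover have "hd ` P \<subseteq> W" using hd(2) by blast
  ultimately show "finite P" using \<open>finite W\<close> finite_subset by (blast dest: finite_imageD)
qed

fun upto_first :: "'a set \<Rightarrow> 'a list \<Rightarrow> 'a list" where
  "upto_first T [] = []"
| "upto_first T (x # xs) = (if x \<in> T then [x] else x # upto_first T xs)"

lemma upto_first_prefix: "\<exists>r. upto_first T xs @ r = xs"
  by (induction xs) auto

lemma upto_first_hits:
  assumes "set xs \<inter> T \<noteq> {}"
  shows "upto_first T xs \<noteq> [] \<and> hd (upto_first T xs) = hd xs
    \<and> set (upto_first T xs) \<inter> T = {last (upto_first T xs)}"
  using assms by (induction xs) auto

lemma linkage_trim_end: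
  assumes "linkage E W A T P"
  shows "\<exists>Q. linkage E W A T Q \<and> card Q = card P \<and> (\<forall>q\<in>Q. set q \<inter> T = {last q})"
proof -
  have trim: "is_path W E (upto_first T p) (hd (upto_first T p)) (last (upto_first T p))
      \<and> hd (upto_first T p) \<in> A \<and> upto_first T p \<noteq> []
      \<and> set (upto_first T p) \<inter> T = {last (upto_first T p)} \<and> set (upto_first T p) \<subseteq> set p"
    if "p \<in> P" for p
  proof -
    have p: "is_path W E p (hd p) (last p)" "hd p \<in> A" "last p \<in> T"
      using linkage_paths[OF assms that] by auto
    then have "set p \<inter> T \<noteq> {}" using is_path_endpoints by fastforce
    note hits = upto_first_hits[OF this]
    obtain r where r: "upto_first T p @ r = p" using upto_first_prefix by blast
    have "is_path W E (upto_first T p) (hd p) (last (upto_first T p))"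
      using is_path_prefix[of W E "upto_first T p" r] p(1) r hits by simp
    moreover have "set (upto_first T p) \<subseteq> set p" using r by (metis set_append Un_upper1)
    ultimately show ?thesis using hits p(2) by simp
  qed
  have "disjoint_paths (upto_first T ` P) \<and> card (upto_first T ` P) = card P"
    using assms trim by (intro disjoint_paths_shrink) (simp_all add: linkage_def)
  moreover have "\<forall>q\<in>upto_first T ` P. is_path W E q (hd q) (last q) \<and> hd q \<in> A \<and> last q \<in> T
      \<and> set q \<inter> T = {last q}"
    using trim by auto
  ultimately show ?thesis unfolding linkage_def by (intro exI[of _ "upto_first T ` P"]) simp
qed

lemma linkage_trim_start:
  assumes "linkage E W T B P"
  shows "\<exists>Q. linkage E W T B Q \<and> card Q = card P \<and> (\<forall>q\<in>Q. set q \<inter> T = {hd q})"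
proof -
  have rev: "linkage E W B T (rev ` P)" "card (rev ` P) = card P"
    using linkage_rev[OF assms] by auto
  obtain Q where Q: "linkage E W B T Q" "card Q = card P" "\<forall>q\<in>Q. set q \<inter> T = {last q}"
    using linkage_trim_end[OF rev(1)] rev(2) by auto
  have "linkage E W T B (rev ` Q)" "card (rev ` Q) = card P"
    using linkage_rev[OF Q(1)] Q(2) by auto
  moreover have "\<forall>q\<in>rev ` Q. set q \<inter> T = {hd q}"
    using Q(3) by (simp add: hd_rev)
  ultimately show ?thesis by (intro exI[of _ "rev ` Q"]) simp
qed

section \<open>Menger's theorem\<close>

lemma cut_edge_side:
  assumes conn: "connects E W A B" and sep: "\<not> connects E' W A B" and E: "E \<subseteq> insert {x, y} E'"
  shows "connects E' W A {x} \<longleftrightarrow> \<not> connects E' W A {y}"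
proof (rule ccontr)
  assume same: "\<not> (connects E' W A {x} \<longleftrightarrow> \<not> connects E' W A {y})"
  have reach: "connects E' W A {z}" if "reachable E W a z" "a \<in> A" for a z
    using that
  proof (induction rule: reachable.induct)
    case (refl a)
    then show ?case unfolding connects_def by (blast intro: reachable.refl)
  next
    case (step a b c)
    then have b: "connects E' W A {b}" by simp
    show ?case
    proof (cases "{b, c} \<in> E'")
      case True
      show ?thesis using connects_step[OF b True step.hyps(3)] .
    next
      case False
      then have "{b, c} = {x, y}" using step.hyps(2) E by blast
      with b same show ?thesis by (auto simp: doubleton_eq_iff)
    qed
  qed
  obtain a b where "a \<in> A" "b \<in> B" "reachable E W a b" using conn unfolding connects_def by blast
  with reach have "connects E' W A {b}" by blast
  with \<open>b \<in> B\<close> sep show False unfolding connects_def by blast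
qed

lemma cut_edge_orient:
  assumes conn: "connects E W A B" and sep: "\<not> connects E' W A B" and E: "E \<subseteq> insert {x0, y0} E'"
  obtains x y where "{x, y} = {x0, y0}" "connects E' W A {x}" "\<not> connects E' W A {y}"
    "connects E' W {y} B" "\<not> connects E' W {x} B"
proof -
  have A: "connects E' W A {x0} \<longleftrightarrow> \<not> connects E' W A {y0}"
    using cut_edge_side[OF conn sep E] .
  have B: "connects E' W {x0} B \<longleftrightarrow> \<not> connects E' W {y0} B"
    using cut_edge_side[of E W B A E' x0 y0] conn sep E by (simp add: connects_sym)
  have not_both: "\<not> (connects E' W A {z} \<and> connects E' W {z} B)" for z
    using sep connects_trans[of E' W A z B] by blast
  show ?thesis
  proof (cases "connects E' W A {x0}")
    case True
    with A B not_both show ?thesis using that[of x0 y0] by blast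
  next
    case False
    with A B not_both show ?thesis using that[of y0 x0] by (simp add: insert_commute)
  qed
qed

text \<open>
  A walk of \<open>G\<close> from \<open>a\<close> is a walk of \<open>G - xy\<close> until it first meets \<open>T \<ni> x\<close>: it could only
  use the edge \<open>xy\<close> coming from \<open>y\<close>, which \<open>a\<close> does not reach.
\<close>
lemma reachable_hits_or_avoids:
  assumes "reachable E W a z" "\<not> reachable E' U a y"
    and E: "E \<subseteq> insert {x, y} E'" and "x \<in> T" "W - T \<subseteq> U"
  shows "connects E' W {a} T \<or> (z \<notin> T \<and> reachable E' (W - T) a z)"
  using assms(1,2)
proof (induction rule: reachable.induct)
  case (refl a)
  then show ?case by (cases "a \<in> T") (auto simp: connects_def intro: reachable.refl)
next
  case (step a b c)
  show ?case
  proof (cases "connects E' W {a} T")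
    case False
    then have b: "b \<notin> T" "reachable E' (W - T) a b" using step by auto
    have "{b, c} \<in> E'"
    proof (rule ccontr)
      assume "{b, c} \<notin> E'"
      then have "b = y" using step.hyps(2) E b(1) \<open>x \<in> T\<close> by (auto simp: doubleton_eq_iff)
      with reachable_subset[OF b(2) \<open>W - T \<subseteq> U\<close>] step.prems show False by simp
    qed
    show ?thesis
    proof (cases "c \<in> T")
      case True
      have "reachable E' W a c"
        using reachable.step[OF reachable_subset[OF b(2)] \<open>{b, c} \<in> E'\<close>] step.hyps(3) by blast
      with True show ?thesis unfolding connects_def by blast
    next
      case False
      with step.hyps(3) have "c \<in> W - T" by blast
      with False show ?thesis using reachable.step[OF b(2) \<open>{b, c} \<in> E'\<close>] by blast
    qed
  qed simp
qed

lemma connects_avoiding: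
  assumes conn: "connects E (V - X) A B" and sep: "\<not> connects E' (V - S) A B"
    and y: "\<not> connects E' (V - S) A {y}" and E: "E \<subseteq> insert {x, y} E'"
  shows "connects E' (V - X) A (insert x S)"
proof -
  obtain a b where ab: "a \<in> A" "b \<in> B" "reachable E (V - X) a b"
    using conn unfolding connects_def by blast
  moreover have "\<not> reachable E' (V - S) a y" using y ab(1) unfolding connects_def by blast
  moreover have "V - X - insert x S \<subseteq> V - S" by blast
  ultimately have "connects E' (V - X) {a} (insert x S) \<or> reachable E' (V - X - insert x S) a b"
    using reachable_hits_or_avoids[OF _ _ E] by blast
  then show ?thesis
  proof
    assume "connects E' (V - X) {a} (insert x S)"
    with ab(1) show ?thesis unfolding connects_def by blast
  next
    assume "reachable E' (V - X - insert x S) a b"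
    then have "reachable E' (V - S) a b" by (rule reachable_subset) blast
    with ab sep show ?thesis unfolding connects_def by blast
  qed
qed

lemma linkage_crossing:
  assumes Q1: "linkage E V A (insert x S) Q1" "\<forall>p\<in>Q1. set p \<inter> insert x S = {last p}"
    and Q2: "linkage E V (insert y S) B Q2" "\<forall>q\<in>Q2. set q \<inter> insert y S = {hd q}"
    and x: "connects E (V - S) A {x}" and y: "connects E (V - S) {y} B"
    and sep: "\<not> connects E (V - S) A B"
    and pq: "p \<in> Q1" "q \<in> Q2" "z \<in> set p" "z \<in> set q"
  shows "z = last p \<and> z = hd q"
proof -
  have p_meets: "set p \<inter> insert x S = {last p}" using bspec[OF Q1(2) pq(1)] .
  have q_meets: "set q \<inter> insert y S = {hd q}" using bspec[OF Q2(2) pq(2)] .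
  have "z \<in> S"
  proof (rule ccontr)
    assume "z \<notin> S"
    have "connects E (V - S) A {z}"
    proof (cases "z = last p")
      case True
      with p_meets \<open>z \<notin> S\<close> have "z = x" by (metis Int_iff insertE singletonI)
      with x show ?thesis by simp
    next
      case False
      have p: "is_path V E p (hd p) (last p)" "hd p \<in> A" using linkage_paths[OF Q1(1) pq(1)] by auto
      have "reachable E (V - insert x S) (hd p) z"
        using path_prefix_reachable[OF p(1) p_meets pq(3) False] .
      then have "reachable E (V - S) (hd p) z" by (rule reachable_subset) blast
      with p(2) show ?thesis unfolding connects_def by blast
    qed
    moreover have "connects E (V - S) {z} B"
    proof (cases "z = hd q")
      case True
      with q_meets \<open>z \<notin> S\<close> have "z = y" by (metis Int_iff insertE singletonI)
      with y show ?thesis by simp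
    next
      case False
      have q: "is_path V E (rev q) (last q) (hd q)" "last q \<in> B"
        using linkage_paths[OF Q2(1) pq(2)] by (auto simp: is_path_rev)
      have "reachable E (V - insert y S) (last q) z"
        using path_prefix_reachable[OF q(1) _ _ False] q_meets pq(4) by simp
      then have "reachable E (V - S) (last q) z" by (rule reachable_subset) blast
      with q(2) show ?thesis unfolding connects_def by (blast intro: reachable_sym)
    qed
    ultimately show False using sep connects_trans[of E "V - S" A z B] by blast
  qed
  with p_meets q_meets pq(3,4) show ?thesis by blast
qed

lemma linkage_join:
  assumes Q1: "linkage E' V A (insert x S) Q1" and Q2: "linkage E' V (insert y S) B Q2"
    and last: "bij_betw last Q1 (insert x S)" and hd: "bij_betw hd Q2 (insert y S)"
    and cross: "\<And>p q z. p \<in> Q1 \<Longrightarrow> q \<in> Q2 \<Longrightarrow> z \<in> set p \<Longrightarrow> z \<in> set q \<Longrightarrow> z = last p \<and> z = hd q"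
    and xy: "x \<notin> S" "y \<notin> S" "{x, y} \<in> E" and E': "E' \<subseteq> E"
  shows "\<exists>P. linkage E V A B P \<and> card P = card (insert x S)"
proof -
  let ?T = "insert x S"
  \<comment> \<open>The path ending in \<open>x\<close> continues through the edge \<open>xy\<close>, each other one at its end in \<open>S\<close>.\<close>
  define \<sigma> where "\<sigma> t = (if t = x then y else t)" for t
  define p where "p t = the_inv_into Q1 last t" for t
  define q where "q t = the_inv_into Q2 hd (\<sigma> t)" for t
  have \<sigma>: "\<sigma> t \<in> insert y S" if "t \<in> ?T" for t
    using that unfolding \<sigma>_def by auto
  have p: "p t \<in> Q1" "last (p t) = t" if "t \<in> ?T" for t
    unfolding p_def using bij_betw_apply[OF bij_betw_the_inv_into[OF last] that]
      f_the_inv_into_f_bij_betw[OF last that] by auto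
  have q: "q t \<in> Q2" "hd (q t) = \<sigma> t" if "t \<in> ?T" for t
    unfolding q_def using bij_betw_apply[OF bij_betw_the_inv_into[OF hd] \<sigma>[OF that]]
      f_the_inv_into_f_bij_betw[OF hd \<sigma>[OF that]] by auto
  have meet: "set (p t) \<inter> set (q t') \<subseteq> {t} \<inter> {\<sigma> t'}" if "t \<in> ?T" "t' \<in> ?T" for t t'
    using cross[OF p(1)[OF that(1)] q(1)[OF that(2)]] p(2)[OF that(1)] q(2)[OF that(2)] by auto
  have "is_path V E (glue (p t) (q t)) (hd (glue (p t) (q t))) (last (glue (p t) (q t)))
      \<and> hd (glue (p t) (q t)) \<in> A \<and> last (glue (p t) (q t)) \<in> B" if "t \<in> ?T" for t
  proof -
    have ends: "is_path V E (p t) (hd (p t)) t" "is_path V E (q t) (\<sigma> t) (last (q t))"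
      "hd (p t) \<in> A" "last (q t) \<in> B"
      using linkage_paths[OF Q1 p(1)[OF that]] linkage_paths[OF Q2 q(1)[OF that]]
        p(2)[OF that] q(2)[OF that] is_path_edges[OF _ E'] by auto
    have "t = \<sigma> t \<or> {t, \<sigma> t} \<in> E" using xy(3) unfolding \<sigma>_def by auto
    with ends(1,2) meet[OF that that]
    have "is_path V E (glue (p t) (q t)) (hd (p t)) (last (q t))" by (rule is_path_glue)
    with ends(3,4) show ?thesis by (simp add: is_path_iff_walk)
  qed
  moreover have "set (glue (p t) (q t)) \<inter> set (glue (p t') (q t')) = {}"
    if "t \<in> ?T" "t' \<in> ?T" "t \<noteq> t'" for t t'
  proof -
    have "p t \<noteq> p t'" using p(2)[OF that(1)] p(2)[OF that(2)] that(3) by auto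
    then have "set (p t) \<inter> set (p t') = {}"
      by (rule linkage_disjoint[OF Q1 p(1)[OF that(1)] p(1)[OF that(2)]])
    moreover have "\<sigma> t \<noteq> \<sigma> t'" "t \<noteq> \<sigma> t'" "t' \<noteq> \<sigma> t" using that xy(1,2) unfolding \<sigma>_def by auto
    then have "q t \<noteq> q t'" using q(2)[OF that(1)] q(2)[OF that(2)] by auto
    then have "set (q t) \<inter> set (q t') = {}"
      by (rule linkage_disjoint[OF Q2 q(1)[OF that(1)] q(1)[OF that(2)]])
    moreover have "set (p t) \<inter> set (q t') = {}" "set (p t') \<inter> set (q t) = {}"
      using meet[OF that(1,2)] meet[OF that(2,1)] \<open>t \<noteq> \<sigma> t'\<close> \<open>t' \<noteq> \<sigma> t\<close> by auto
    ultimately show ?thesis using set_glue[of "p t" "q t"] set_glue[of "p t'" "q t'"] by blast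
  qed
  ultimately have "linkage E V A B ((\<lambda>t. glue (p t) (q t)) ` ?T)
      \<and> card ((\<lambda>t. glue (p t) (q t)) ` ?T) = card ?T"
    by (rule linkage_image)
  then show ?thesis by blast
qed

lemma menger_no_edges:
  assumes "\<And>X. X \<subseteq> V \<Longrightarrow> card X < k \<Longrightarrow> connects {} (V - X) A B"
  shows "\<exists>P. linkage E V A B P \<and> card P = k"
proof -
  let ?X = "A \<inter> B \<inter> V"
  have "\<not> card ?X < k"
  proof
    assume "card ?X < k"
    then obtain a b where "a \<in> A" "b \<in> B" "reachable {} (V - ?X) a b"
      using assms[of ?X] unfolding connects_def by blast
    then show False using reachable_no_edges reachable_in by fastforce
  qed
  then obtain Y where Y: "Y \<subseteq> ?X" "card Y = k" by (meson not_less obtain_subset_with_card_n)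
  then have "linkage E V A B ((\<lambda>v. [v]) ` Y) \<and> card ((\<lambda>v. [v]) ` Y) = card Y"
    by (intro linkage_image) (auto simp: is_path_iff_walk)
  with Y(2) show ?thesis by blast
qed

text \<open>
  Goering's step: \<open>S\<close> separates \<open>A\<close> from \<open>B\<close> in \<open>G - e\<close> but not in \<open>G\<close>, so \<open>e = xy\<close> with
  \<open>x\<close> on the \<open>A\<close>-side and \<open>y\<close> on the \<open>B\<close>-side. By induction \<open>G - e\<close> links \<open>A\<close> to \<open>S + x\<close> and
  \<open>S + y\<close> to \<open>B\<close> by \<open>k\<close> paths each; these meet only in \<open>S\<close> and glue, together with \<open>e\<close>,
  to \<open>k\<close> disjoint \<open>A\<close>-\<open>B\<close> paths.
\<close>
lemma menger_step:
  assumes IH: "\<And>A B. (\<And>X. X \<subseteq> V \<Longrightarrow> card X < k \<Longrightarrow> connects E' (V - X) A B)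
      \<Longrightarrow> \<exists>P. linkage E' V A B P \<and> card P = k"
    and conn: "\<And>X. X \<subseteq> V \<Longrightarrow> card X < k \<Longrightarrow> connects E (V - X) A B"
    and E: "E \<subseteq> insert {x0, y0} E'" "E' \<subseteq> E" "{x0, y0} \<in> E"
    and S: "finite S" "S \<subseteq> V" "card S < k" "\<not> connects E' (V - S) A B"
  shows "\<exists>P. linkage E V A B P \<and> card P = k"
proof -
  obtain x y where xy: "{x, y} = {x0, y0}" "connects E' (V - S) A {x}" "\<not> connects E' (V - S) A {y}"
      "connects E' (V - S) {y} B" "\<not> connects E' (V - S) {x} B"
    using cut_edge_orient[OF conn[OF S(2,3)] S(4) E(1)] by blast
  have "x \<notin> S" "y \<notin> S"
    using xy(2,4) reachable_in unfolding connects_def by fastforce+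
  have "connects E' (V - X) A (insert x S)" if "X \<subseteq> V" "card X < k" for X
    using connects_avoiding[OF conn[OF that] S(4) xy(3)] E(1) xy(1) by simp
  then obtain P1 where P1: "linkage E' V A (insert x S) P1" "card P1 = k" using IH by blast
  have "connects E' (V - X) (insert y S) B" if "X \<subseteq> V" "card X < k" for X
    using connects_avoiding[where A=B and B=A and x=y and y=x] conn[OF that] S(4) xy(5) E(1) xy(1)
    by (simp add: connects_sym insert_commute)
  then obtain P2 where P2: "linkage E' V (insert y S) B P2" "card P2 = k" using IH by blast
  obtain Q1 where Q1: "linkage E' V A (insert x S) Q1" "card Q1 = k" "\<forall>p\<in>Q1. set p \<inter> insert x S = {last p}"
    using linkage_trim_end[OF P1(1)] P1(2) by auto
  obtain Q2 where Q2: "linkage E' V (insert y S) B Q2" "card Q2 = k" "\<forall>q\<in>Q2. set q \<inter> insert y S = {hd q}"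
    using linkage_trim_start[OF P2(1)] P2(2) by auto
  have card_le: "card (insert v S) \<le> k" for v using S(1,3) card_insert_le_m1 by (simp add: card_insert_if)
  have last: "bij_betw last Q1 (insert x S)"
    using Q1 card_le S(1) by (intro bij_betw_vertex_choice) (auto simp: linkage_def)
  have hd: "bij_betw hd Q2 (insert y S)"
    using Q2 card_le S(1) by (intro bij_betw_vertex_choice) (auto simp: linkage_def)
  have cross: "z = last p \<and> z = hd q"
    if "p \<in> Q1" "q \<in> Q2" "z \<in> set p" "z \<in> set q" for p q z
    by (rule linkage_crossing[OF Q1(1,3) Q2(1,3) xy(2,4) S(4) that])
  have "{x, y} \<in> E" using E(3) xy(1) by simp
  with linkage_join[OF Q1(1) Q2(1) last hd cross \<open>x \<notin> S\<close> \<open>y \<notin> S\<close>] E(2)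
  obtain P where "linkage E V A B P" "card P = card (insert x S)" by blast
  moreover have "card (insert x S) = k" using bij_betw_same_card[OF last] Q1(2) by simp
  ultimately show ?thesis by blast
qed

theorem menger:
  assumes "finite V" "finite E" "\<forall>e\<in>E. \<exists>x y. e = {x, y}"
    and "\<And>X. X \<subseteq> V \<Longrightarrow> card X < k \<Longrightarrow> connects E (V - X) A B"
  shows "\<exists>P. linkage E V A B P \<and> card P = k"
  using assms(2-)
proof (induction "card E" arbitrary: E A B rule: less_induct)
  case less
  show ?case
  proof (cases "E = {}")
    case True
    have "connects {} (V - X) A B" if "X \<subseteq> V" "card X < k" for X
      using less.prems(3)[OF that] True by simp
    then show ?thesis by (rule menger_no_edges)
  next
    case False
    then obtain e0 where "e0 \<in> E" by blast
    with less.prems(2) obtain x y where "e0 = {x, y}" by blast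
    with \<open>e0 \<in> E\<close> have e: "{x, y} \<in> E" by simp
    let ?E' = "E - {{x, y}}"
    have smaller: "card ?E' < card E" "finite ?E'" "\<forall>e\<in>?E'. \<exists>x y. e = {x, y}"
      using card_Diff1_less[OF less.prems(1) e] less.prems(1,2) by auto
    have IH: "\<exists>P. linkage ?E' V A' B' P \<and> card P = k"
      if "\<And>X. X \<subseteq> V \<Longrightarrow> card X < k \<Longrightarrow> connects ?E' (V - X) A' B'" for A' B'
      by (rule less.hyps[OF smaller that])
    show ?thesis
    proof (cases "\<forall>X. X \<subseteq> V \<longrightarrow> card X < k \<longrightarrow> connects ?E' (V - X) A B")
      case True
      then obtain P where "linkage ?E' V A B P" "card P = k" using IH[of A B] by blast
      with linkage_edges[of ?E' V A B P E] show ?thesis by blast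
    next
      case False
      then obtain S where S: "S \<subseteq> V" "card S < k" "\<not> connects ?E' (V - S) A B" by blast
      have "finite S" using S(1) \<open>finite V\<close> by (rule finite_subset)
      have "E \<subseteq> insert {x, y} ?E'" "?E' \<subseteq> E" by auto
      from menger_step[OF IH less.prems(3) this e \<open>finite S\<close> S] show ?thesis .
    qed
  qed
qed

section \<open>Disjoint paths in \<open>k\<close>-connected graphs\<close>

lemma simple_graph_finite_edges: "simple_graph V E \<Longrightarrow> finite E"
proof -
  assume G: "simple_graph V E"
  then have "finite V" "E \<subseteq> Pow V" unfolding simple_graph_def by fastforce+
  then show "finite E" by (meson finite_Pow_iff finite_subset)
qed

lemma simple_graph_subset: "simple_graph V E \<Longrightarrow> F \<subseteq> E \<Longrightarrow> simple_graph V F"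
  unfolding simple_graph_def by (meson subsetD)

lemma k_connected_path:
  assumes "k_connected V F k" "S \<subseteq> V" "card S < k" "u \<in> V - S" "v \<in> V - S"
  shows "\<exists>xs. is_path (V - S) F xs u v"
proof -
  have "connected_graph (V - S) {e \<in> F. e \<inter> S = {}}"
    using assms(1-3) unfolding k_connected_def by simp
  then obtain xs where "is_path (V - S) {e \<in> F. e \<inter> S = {}} xs u v"
    using assms(4,5) unfolding connected_graph_def by blast
  then have "is_path (V - S) F xs u v" by (rule is_path_edges) blast
  then show ?thesis by blast
qed

lemma path_first_neighbour:
  assumes "is_path W F xs u v" "u \<noteq> v"
  shows "\<exists>a. {u, a} \<in> F \<and> reachable F (W - {u}) a v"
proof -
  note tl = is_path_tl[OF assms]
  from tl(1) is_path_reachable[OF tl[THEN conjunct2]] show ?thesis by blast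
qed

lemma path_inner_reachable:
  assumes "is_path W F xs u v" "u \<noteq> v" "{u, v} \<notin> F"
  shows "\<exists>a b. {u, a} \<in> F \<and> {v, b} \<in> F \<and> reachable F (W - {u, v}) a b"
proof -
  let ?a = "hd (tl xs)"
  have a: "{u, ?a} \<in> F" "is_path (W - {u}) F (rev (tl xs)) v ?a"
    using is_path_tl[OF assms(1,2)] by (simp_all add: is_path_rev)
  with assms(3) have "v \<noteq> ?a" by auto
  then obtain b where b: "{v, b} \<in> F" "reachable F (W - {u} - {v}) b ?a"
    using path_first_neighbour[OF a(2)] by blast
  have "W - {u} - {v} = W - {u, v}" by blast
  with reachable_sym[OF b(2)] a(1) b(1) show ?thesis by auto
qed

lemma k_connected_connects_neighbours:
  assumes kc: "k_connected V F k" and fin: "finite V" and uv: "u \<in> V" "v \<in> V" "u \<noteq> v"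
    and X: "X \<subseteq> V - {u, v}" "card X < (if {u, v} \<in> F then k - 1 else k)"
  shows "connects F (V - {u, v} - X) {w. {u, w} \<in> F} {w. {v, w} \<in> F}"
proof (cases "{u, v} \<in> F")
  case False
  with X have "card X < k" by simp
  with X(1) uv obtain xs where xs: "is_path (V - X) F xs u v"
    using k_connected_path[OF kc, of X u v] by blast
  obtain a b where "{u, a} \<in> F" "{v, b} \<in> F" "reachable F (V - X - {u, v}) a b"
    using path_inner_reachable[OF xs uv(3) False] by blast
  moreover have "V - X - {u, v} = V - {u, v} - X" by blast
  ultimately show ?thesis unfolding connects_def by auto
next
  case True
  with X have cX: "card X + 1 < k" by simp
  have "finite X" using X(1) fin by (meson finite_Diff finite_subset)
  then have "card (X \<union> {u, v}) \<le> card X + 2" by (simp add: card_insert_if)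
  also have "\<dots> < card V" using cX kc unfolding k_connected_def by simp
  finally have "\<not> V \<subseteq> X \<union> {u, v}"
    using \<open>finite X\<close> by (meson card_mono finite.emptyI finite.insertI finite_UnI not_le)
  then obtain w where w: "w \<in> V" "w \<notin> X" "w \<noteq> u" "w \<noteq> v" by blast
  have "card (insert v X) < k" "card (insert u X) < k"
    using cX \<open>finite X\<close> card_insert_le_m1 by (simp_all add: card_insert_if)
  then obtain xs ys where "is_path (V - insert v X) F xs u w" "is_path (V - insert u X) F ys v w"
    using k_connected_path[OF kc, of "insert v X" u w] k_connected_path[OF kc, of "insert u X" v w]
      X(1) uv w by blast
  then obtain a b where a: "{u, a} \<in> F" "reachable F (V - insert v X - {u}) a w"
      and b: "{v, b} \<in> F" "reachable F (V - insert u X - {v}) b w"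
    using path_first_neighbour[of _ F _ u w] path_first_neighbour[of _ F _ v w] w(3,4) by metis
  have "V - insert v X - {u} = V - {u, v} - X" "V - insert u X - {v} = V - {u, v} - X" by auto
  with a(2) b(2) have "reachable F (V - {u, v} - X) a b" by (metis reachable_sym reachable_trans)
  with a(1) b(1) show ?thesis unfolding connects_def by blast
qed

lemma is_path_extend:
  assumes q: "is_path (V - {u, v}) F q a b" and "{u, a} \<in> F" "{v, b} \<in> F" "u \<in> V" "v \<in> V" "u \<noteq> v"
  shows "is_path V F (u # q @ [v]) u v"
proof -
  have "q \<noteq> []" "hd q = a" "last q = b" "distinct q" "set q \<subseteq> V - {u, v}" "is_walk F q"
    using q unfolding is_path_iff_walk by auto
  with assms(2-) show ?thesis
    by (auto simp: is_path_iff_walk is_walk_Cons is_walk_append insert_commute)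
qed

text \<open>
  \<open>k\<close> internally disjoint \<open>u\<close>-\<open>v\<close> paths are \<open>k\<close> disjoint paths in \<open>G - u - v\<close> between the
  neighbourhoods of \<open>u\<close> and \<open>v\<close>, the edge \<open>uv\<close>, if present, being one more.
\<close>
lemma k_connected_disjoint_paths:
  assumes G: "simple_graph V F" and kc: "k_connected V F k" and "1 \<le> k"
    and uv: "u \<in> V" "v \<in> V" "u \<noteq> v"
  shows "\<exists>P. card P = k \<and> (\<forall>xs\<in>P. is_path V F xs u v)
    \<and> (\<forall>xs\<in>P. \<forall>ys\<in>P. xs \<noteq> ys \<longrightarrow> interior xs \<inter> interior ys = {})"
proof -
  let ?k' = "if {u, v} \<in> F then k - 1 else k"
  have fin: "finite V" "finite F" "\<forall>e\<in>F. \<exists>x y. e = {x, y}"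
    using G simple_graph_finite_edges[OF G] unfolding simple_graph_def by blast+
  obtain Q where Q: "linkage F (V - {u, v}) {w. {u, w} \<in> F} {w. {v, w} \<in> F} Q" "card Q = ?k'"
    using menger[OF _ fin(2,3) k_connected_connects_neighbours[OF kc fin(1) uv]] fin(1) by blast
  define g where "g q = u # q @ [v]" for q
  have paths: "is_path V F (g q) u v" if "q \<in> Q" for q
    using linkage_paths[OF Q(1) that] is_path_extend uv unfolding g_def by auto
  have "inj_on g Q" unfolding g_def by (rule inj_onI) simp
  then have card: "card (g ` Q) = ?k'" using Q(2) by (simp add: card_image)
  have disj: "\<forall>xs\<in>g ` Q. \<forall>ys\<in>g ` Q. xs \<noteq> ys \<longrightarrow> interior xs \<inter> interior ys = {}"
    using Q(1) unfolding linkage_def disjoint_paths_def by (auto simp: interior_def g_def)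
  show ?thesis
  proof (cases "{u, v} \<in> F")
    case False
    with card paths disj show ?thesis by (intro exI[of _ "g ` Q"]) auto
  next
    case True
    have "[u, v] \<notin> g ` Q"
      using Q(1) unfolding g_def linkage_def is_path_iff_walk by (auto simp: Cons_eq_append_conv)
    moreover have "finite (g ` Q)" using finite_linkage[OF Q(1)] fin(1) by simp
    ultimately have "card (insert [u, v] (g ` Q)) = k" using card True \<open>1 \<le> k\<close> by simp
    moreover have "is_path V F [u, v] u v" using True uv by (simp add: is_path_iff_walk)
    moreover have "interior [u, v] = {}" by (simp add: interior_def)
    ultimately show ?thesis using paths disj by (intro exI[of _ "insert [u, v] (g ` Q)"]) auto
  qed
qed

lemma k_connected_edges_nonempty:
  assumes kc: "k_connected V F k" and "1 \<le> k"
  shows "F \<noteq> {}"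
proof -
  have "card V \<ge> 2" using kc assms(2) unfolding k_connected_def by simp
  then have "finite V" "\<not> card V \<le> Suc 0" by (auto intro: card_ge_0_finite)
  then obtain u v where uv: "u \<in> V" "v \<in> V" "u \<noteq> v" using card_le_Suc0_iff_eq by blast
  then obtain xs where "is_path (V - {}) F xs u v" using k_connected_path[OF kc, of "{}"] assms(2) by auto
  with uv(3) show ?thesis using is_path_tl by fastforce
qed

section \<open>Colourings\<close>

lemma path_edges_subset: "is_path W F xs u v \<Longrightarrow> path_edges xs \<subseteq> F"
  unfolding is_path_def path_edges_def by blast

lemma mono_k_conn_const:
  assumes "simple_graph V F" "k_connected V F k" "1 \<le> k"
  shows "mono_k_conn V F k (\<lambda>_. c)"
  unfolding mono_k_conn_def
proof (intro ballI impI)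
  fix u v assume "u \<in> V" "v \<in> V" "u \<noteq> v"
  from k_connected_disjoint_paths[OF assms this] obtain P where
    "card P = k" "\<forall>xs\<in>P. is_path V F xs u v"
    "\<forall>xs\<in>P. \<forall>ys\<in>P. xs \<noteq> ys \<longrightarrow> interior xs \<inter> interior ys = {}" by blast
  then show "\<exists>P. card P = k \<and> (\<forall>xs\<in>P. is_path V F xs u v \<and> (\<exists>col. \<forall>e\<in>path_edges xs. c = col))
      \<and> (\<forall>xs\<in>P. \<forall>ys\<in>P. xs \<noteq> ys \<longrightarrow> interior xs \<inter> interior ys = {})"
    by (intro exI[of _ P]) simp
qed

lemma mono_k_conn_supergraph:
  assumes c: "mono_k_conn V F k c" and "F \<subseteq> E" and agree: "\<forall>e\<in>F. c' e = c e"
  shows "mono_k_conn V E k c'"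
  unfolding mono_k_conn_def
proof (intro ballI impI)
  fix u v assume "u \<in> V" "v \<in> V" "u \<noteq> v"
  with c obtain P where P: "card P = k"
      "\<forall>xs\<in>P. is_path V F xs u v \<and> (\<exists>col. \<forall>e\<in>path_edges xs. c e = col)"
      "\<forall>xs\<in>P. \<forall>ys\<in>P. xs \<noteq> ys \<longrightarrow> interior xs \<inter> interior ys = {}"
    unfolding mono_k_conn_def by blast
  have "is_path V E xs u v \<and> (\<exists>col. \<forall>e\<in>path_edges xs. c' e = col)" if "xs \<in> P" for xs
  proof -
    from P(2) that obtain col where xs: "is_path V F xs u v" "\<forall>e\<in>path_edges xs. c e = col" by blast
    then have "\<forall>e\<in>path_edges xs. c' e = col" using path_edges_subset[OF xs(1)] agree by auto
    with is_path_edges[OF xs(1) \<open>F \<subseteq> E\<close>] show ?thesis by blast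
  qed
  with P(1,3) show "\<exists>P. card P = k \<and> (\<forall>xs\<in>P. is_path V E xs u v \<and> (\<exists>col. \<forall>e\<in>path_edges xs. c' e = col))
      \<and> (\<forall>xs\<in>P. \<forall>ys\<in>P. xs \<noteq> ys \<longrightarrow> interior xs \<inter> interior ys = {})"
    by (intro exI[of _ P]) simp
qed

lemma finite_colour_counts: "finite E \<Longrightarrow> finite {card (c ` E) | c. mono_k_conn V E k c}"
  by (rule finite_subset[of _ "{..card E}"]) (auto simp: card_image_le)

lemma mc_upper: "finite E \<Longrightarrow> mono_k_conn V E k c \<Longrightarrow> card (c ` E) \<le> mc V E k"
  unfolding mc_def by (rule Max_ge[OF finite_colour_counts]) auto

lemma mc_attained:
  assumes "finite E" "mono_k_conn V E k c"
  shows "\<exists>c'. mono_k_conn V E k c' \<and> card (c' ` E) = mc V E k"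
proof -
  have "mc V E k \<in> {card (c ` E) | c. mono_k_conn V E k c}"
    unfolding mc_def using finite_colour_counts[OF assms(1)] assms(2) by (intro Max_in) auto
  then show ?thesis by auto
qed

lemma mc_add_fresh_colours:
  assumes "F \<subseteq> E" "finite E" "mono_k_conn V F k c"
  shows "mc V F k + card (E - F) \<le> mc V E k"
proof -
  have "finite F" using assms(1,2) by (rule finite_subset)
  obtain c0 where c0: "mono_k_conn V F k c0" "card (c0 ` F) = mc V F k"
    using mc_attained[OF \<open>finite F\<close> assms(3)] by blast
  obtain g :: "'a set \<Rightarrow> nat" where g: "inj_on g (E - F)"
    using finite_imp_inj_to_nat_seg[of "E - F"] assms(2) by blast
  define N where "N = Suc (Max (c0 ` F))"
  define c' where "c' e = (if e \<in> F then c0 e else N + g e)" for e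
  have "c' ` E = c0 ` F \<union> (\<lambda>e. N + g e) ` (E - F)"
    using assms(1) unfolding c'_def by auto
  moreover have "c0 ` F \<inter> (\<lambda>e. N + g e) ` (E - F) = {}"
  proof -
    have "c0 e < N" if "e \<in> F" for e
    proof -
      have "c0 e \<le> Max (c0 ` F)" by (rule Max_ge) (use \<open>finite F\<close> that in auto)
      then show ?thesis unfolding N_def by simp
    qed
    then show ?thesis by fastforce
  qed
  moreover have "inj_on (\<lambda>e. N + g e) (E - F)" using g by (simp add: inj_on_def)
  ultimately have "card (c' ` E) = mc V F k + card (E - F)"
    using \<open>finite F\<close> assms(2) c0(2) by (simp add: card_Un_disjoint card_image)
  moreover have "mono_k_conn V E k c'"
    using mono_k_conn_supergraph[OF c0(1) assms(1)] unfolding c'_def by simp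
  ultimately show ?thesis using mc_upper[OF assms(2)] by metis
qed

lemma mc_pos:
  assumes "finite F" "F \<noteq> {}" "mono_k_conn V F k c"
  shows "1 \<le> mc V F k"
proof -
  have "1 \<le> card (c ` F)" using assms(1,2) by (simp add: Suc_le_eq card_gt_0_iff)
  also have "\<dots> \<le> mc V F k" using mc_upper[OF assms(1,3)] .
  finally show ?thesis .
qed

lemma min_spanning_card:
  "min_spanning_k_conn V E k F \<Longrightarrow> min_spanning_k_conn V E k F' \<Longrightarrow> card F = card F'"
  unfolding min_spanning_k_conn_def by (simp add: le_antisym)

lemma h_attained:
  assumes "finite E" "min_spanning_k_conn V E k F"
  shows "\<exists>F0. min_spanning_k_conn V E k F0 \<and> h V E k = mc V F0 k"
proof -
  let ?M = "{F. min_spanning_k_conn V E k F}"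
  have "?M \<subseteq> Pow E" unfolding min_spanning_k_conn_def by auto
  then have "finite ?M" using assms(1) by (simp add: finite_subset)
  have "{mc V F k | F. min_spanning_k_conn V E k F} = (\<lambda>F. mc V F k) ` ?M" by blast
  then have "h V E k = Max ((\<lambda>F. mc V F k) ` ?M)" by (simp add: h_def)
  also have "\<dots> \<in> (\<lambda>F. mc V F k) ` ?M"
    using \<open>finite ?M\<close> assms(2) by (intro Max_in) auto
  finally show ?thesis by blast
qed

theorem mainTheorem1:
  fixes V :: "'a set" and E F :: "'a set set" and k :: nat
  assumes "k \<ge> 2"
    and "simple_graph V E"
    and "k_connected V E k"
    and "min_spanning_k_conn V E k F"
  shows "card E - card F + h V E k \<le> mc V E k \<and>
         card E - card F + 1 \<le> card E - card F + h V E k"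
proof -
  have fin: "finite E" using assms(2) by (rule simple_graph_finite_edges)
  obtain F0 where F0: "min_spanning_k_conn V E k F0" "h V E k = mc V F0 k"
    using h_attained[OF fin assms(4)] by blast
  then have F0E: "F0 \<subseteq> E" and kc: "k_connected V F0 k"
    unfolding min_spanning_k_conn_def by auto
  have "1 \<le> k" using assms(1) by simp
  then have mono: "mono_k_conn V F0 k (\<lambda>_. 0)"
    using mono_k_conn_const[OF simple_graph_subset[OF assms(2) F0E] kc] by blast
  have "mc V F0 k + card (E - F0) \<le> mc V E k" using mc_add_fresh_colours[OF F0E fin mono] .
  moreover have "card (E - F0) = card E - card F"
    using min_spanning_card[OF F0(1) assms(4)] fin F0E by (simp add: card_Diff_subset finite_subset)
  moreover have "1 \<le> mc V F0 k"
    using mc_pos[OF finite_subset[OF F0E fin] k_connected_edges_nonempty[OF kc \<open>1 \<le> k\<close>] mono] .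
  ultimately show ?thesis using F0(2) by simp
qed

end
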